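(* Let $m\ge1$ be an integer and let $\xi_1,\dots,\xi_m$ be the zeroes of the function $\alpha_m$. Suppose that for each $i$, $\eta_i=\eta_i(\Delta)$ are numbers satisfying $\eta_i=\xi_i-1+s_i\sqrt{(\xi_i-1)^2-1}+o(1)$ as $\Delta\downarrow0$ for some sign $s_i\in\{+1,-1\}$, where the sign is chosen such that $|\eta_i|<1$ for all sufficiently small $\Delta$. Then necessarily $s_i=-1$, i.e. $$\eta_i=\xi_i-1-\sqrt{(\xi_i-1)^2-1}+o(1),\qquad i=1,\dots,m,$$ and moreover $\xi_i-1-\sqrt{(\xi_i-1)^2-1}\in(0,1)$ for all $i$.
   Context: For $x\in\mathbb{R}\setminus\{0\}$ the functions $\alpha_k(x)$, $k\ge0$, are defined by the power series expansion in $z$ $$\frac{\sinh(z)}{\cosh(z)-1+x}=\sum_{k=0}^\infty\alpha_k(x)z^{2k+1}.$$ (In the paper, $m=p-q-1$ for a CARMA$(p,q)$ process and $\eta_i$ are the "spurious" moving average coefficients of the sampled process.) *)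

theory Defs
  imports "HOL-Analysis.Analysis"
begin

definition alpha :: "nat \<Rightarrow> real \<Rightarrow> real" where
  "alpha k x = (deriv ^^ (2 * k + 1)) (\<lambda>z::real. sinh z / (cosh z - 1 + x)) 0
                / fact (2 * k + 1)"

end

(*
  Put c = 1 - x and r^2 = c^2 - 1. Then sinh z / (cosh z - c) is the mean of
  Y+-(z) = (sinh z +- r) / (cosh z - c), and both solve the Riccati equation Y' = (1 - Y^2) / 2.
  So the n-th derivative is the mean of G_n(Y+-) for a fixed polynomial G_n, and at z = 0,
  where Y+-^2 = 1 - 2/x, this gives alpha k x = Q_k(1 - 2/x) / (2k+1)! for a real polynomial Q_k.
  After the substitutions t = -u and t = 1 + u, the polynomial +-Q_k has nonnegative coefficients
  and a positive constant resp. linear coefficient, so all real zeros of Q_k lie in (0, 1].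
  Hence a zero xi of alpha m satisfies xi > 2; then xi - 1 -+ sqrt ((xi - 1)^2 - 1) lie in (0, 1)
  and (1, oo) respectively, and |eta| < 1 forces the minus sign.
*)

theory Submission
  imports Defs "HOL-Computational_Algebra.Polynomial"
begin

definition nonneg_coeffs :: "'a::linordered_idom poly \<Rightarrow> bool" where
  "nonneg_coeffs p \<longleftrightarrow> (\<forall>i. 0 \<le> coeff p i)"

lemma nonneg_coeffs_add: "nonneg_coeffs p \<Longrightarrow> nonneg_coeffs q \<Longrightarrow> nonneg_coeffs (p + q)"
  unfolding nonneg_coeffs_def by simp

lemma nonneg_coeffs_mult: "nonneg_coeffs p \<Longrightarrow> nonneg_coeffs q \<Longrightarrow> nonneg_coeffs (p * q)"
  unfolding nonneg_coeffs_def coeff_mult by (auto intro!: sum_nonneg)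

lemma nonneg_coeffs_smult: "0 \<le> c \<Longrightarrow> nonneg_coeffs p \<Longrightarrow> nonneg_coeffs (smult c p)"
  unfolding nonneg_coeffs_def by simp

lemma nonneg_coeffs_pderiv: "nonneg_coeffs p \<Longrightarrow> nonneg_coeffs (pderiv p)"
  unfolding nonneg_coeffs_def coeff_pderiv by simp

lemma nonneg_coeffs_pCons_iff: "nonneg_coeffs (pCons a p) \<longleftrightarrow> 0 \<le> a \<and> nonneg_coeffs p"
  unfolding nonneg_coeffs_def by (metis coeff_pCons_0 coeff_pCons_Suc not0_implies_Suc coeff_pCons)

lemma nonneg_coeffs_linear: "0 \<le> a \<Longrightarrow> 0 \<le> b \<Longrightarrow> nonneg_coeffs [:a, b:]"
  unfolding nonneg_coeffs_def coeff_pCons by (simp split: nat.split)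

lemma nonneg_coeffs_imp_poly_nonneg: "nonneg_coeffs p \<Longrightarrow> 0 \<le> u \<Longrightarrow> 0 \<le> poly p u"
  by (induction p) (auto simp: nonneg_coeffs_pCons_iff)

lemma poly_ge_linear_part:
  assumes "nonneg_coeffs p" "0 \<le> u"
  shows "coeff p 0 + u * coeff p 1 \<le> poly p u"
proof -
  obtain a b r where p: "p = pCons a (pCons b r)"
    by (metis pCons_cases)
  have "0 \<le> poly r u"
    using assms by (intro nonneg_coeffs_imp_poly_nonneg) (simp_all add: p nonneg_coeffs_pCons_iff)
  then show ?thesis
    using assms(2) by (simp add: p algebra_simps)
qed

(* If Y' = (1 - Y^2) / 2, then Y^(2k) = Y * P_k(Y^2) and Y^(2k+1) = Q_k(Y^2)
   with P_k = even_deriv_poly k and Q_k = odd_deriv_poly k (see riccati_poly_odd). *)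
definition odd_of_even :: "real poly \<Rightarrow> real poly" where
  "odd_of_even p = smult (1/2) ([:1, -1:] * (p + smult 2 ([:0, 1:] * pderiv p)))"

primrec even_deriv_poly :: "nat \<Rightarrow> real poly" where
  "even_deriv_poly 0 = 1"
| "even_deriv_poly (Suc k) = [:1, -1:] * pderiv (odd_of_even (even_deriv_poly k))"

definition odd_deriv_poly :: "nat \<Rightarrow> real poly" where
  "odd_deriv_poly k = odd_of_even (even_deriv_poly k)"

lemma pcompose_pderiv_reflect: "pcompose (pderiv p) [:0, -1:] = - pderiv (pcompose p [:0, -1 :: 'a::idom:])"
  by (simp add: pderiv_pcompose pderiv_pCons)

lemma pcompose_pderiv_shift: "pcompose (pderiv p) [:1, 1:] = pderiv (pcompose p [:1, 1 :: 'a::idom:])"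
  by (simp add: pderiv_pcompose pderiv_pCons)

lemma odd_of_even_reflect:
  "pcompose (odd_of_even p) [:0, -1:] =
     smult (1/2) ([:1, 1:] * (pcompose p [:0, -1:] + smult 2 ([:0, 1:] * pderiv (pcompose p [:0, -1:]))))"
  unfolding odd_of_even_def pcompose_smult pcompose_mult pcompose_add pcompose_pderiv_reflect
  by (subst poly_eq_poly_eq_iff[symmetric]) (simp add: pcompose_pCons fun_eq_iff algebra_simps)

lemma odd_of_even_shift:
  "pcompose (odd_of_even p) [:1, 1:] =
     - smult (1/2) ([:0, 1:] * (pcompose p [:1, 1:] + smult 2 ([:1, 1:] * pderiv (pcompose p [:1, 1:]))))"
  unfolding odd_of_even_def pcompose_smult pcompose_mult pcompose_add pcompose_pderiv_shift
  by (subst poly_eq_poly_eq_iff[symmetric]) (simp add: pcompose_pCons fun_eq_iff algebra_simps)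

lemma even_deriv_poly_Suc_reflect:
  "pcompose (even_deriv_poly (Suc k)) [:0, -1:] = - ([:1, 1:] * pderiv (pcompose (odd_deriv_poly k) [:0, -1:]))"
  unfolding even_deriv_poly.simps odd_deriv_poly_def pcompose_mult pcompose_pderiv_reflect
  by (simp add: pcompose_pCons)

lemma even_deriv_poly_Suc_shift:
  "pcompose (even_deriv_poly (Suc k)) [:1, 1:] = - ([:0, 1:] * pderiv (pcompose (odd_deriv_poly k) [:1, 1:]))"
  unfolding even_deriv_poly.simps odd_deriv_poly_def pcompose_mult pcompose_pderiv_shift
  by (simp add: pcompose_pCons)

lemma nonneg_coeffs_reflected_step:
  fixes q :: "real poly"
  defines "p \<equiv> smult (1/2) ([:1, 1:] * (q + smult 2 ([:0, 1:] * pderiv q)))"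
  assumes "nonneg_coeffs q" "0 < coeff q 0"
  shows "nonneg_coeffs p" "0 < coeff p 0" "0 < coeff p 1"
proof -
  show "nonneg_coeffs p" unfolding p_def using assms(2)
    by (intro nonneg_coeffs_smult nonneg_coeffs_mult nonneg_coeffs_add nonneg_coeffs_pderiv)
       (auto intro: nonneg_coeffs_linear)
  have "0 \<le> coeff q 1" using assms(2) by (simp add: nonneg_coeffs_def)
  then show "0 < coeff p 0" "0 < coeff p 1" using assms(3) by (simp_all add: p_def coeff_pderiv)
qed

lemma nonneg_coeffs_shifted_step:
  fixes q :: "real poly"
  defines "p \<equiv> smult (1/2) ([:0, 1:] * (q + smult 2 ([:1, 1:] * pderiv q)))"
  assumes "nonneg_coeffs q" "0 < coeff q 0 + coeff q 1"
  shows "nonneg_coeffs p" "0 < coeff p 1"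
proof -
  show "nonneg_coeffs p" unfolding p_def using assms(2)
    by (intro nonneg_coeffs_smult nonneg_coeffs_mult nonneg_coeffs_add nonneg_coeffs_pderiv)
       (auto intro: nonneg_coeffs_linear)
  have "0 \<le> coeff q 0" "0 \<le> coeff q 1" using assms(2) by (simp_all add: nonneg_coeffs_def)
  then show "0 < coeff p 1" using assms(3) by (simp add: p_def coeff_pderiv)
qed

lemma odd_deriv_poly_sign_nonpos:
  assumes "t \<le> 0"
  shows "0 < (-1) ^ k * poly (odd_deriv_poly k) t"
proof -
  define Q where "Q k = smult ((-1) ^ k) (pcompose (even_deriv_poly k) [:0, -1:])" for k
  define P where "P k = smult ((-1) ^ k) (pcompose (odd_deriv_poly k) [:0, -1:])" for k
  have P_eq: "P k = smult (1/2) ([:1, 1:] * (Q k + smult 2 ([:0, 1:] * pderiv (Q k))))" for k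
    unfolding P_def Q_def odd_deriv_poly_def odd_of_even_reflect
    by (subst poly_eq_poly_eq_iff[symmetric]) (simp add: fun_eq_iff pderiv_smult algebra_simps)
  have Q_Suc: "Q (Suc k) = [:1, 1:] * pderiv (P k)" for k
    unfolding P_def Q_def even_deriv_poly_Suc_reflect
    by (subst poly_eq_poly_eq_iff[symmetric]) (simp add: fun_eq_iff pderiv_smult algebra_simps)
  have Q_pos: "nonneg_coeffs (Q k) \<and> 0 < coeff (Q k) 0" for k
  proof (induction k)
    case 0
    show ?case by (simp add: Q_def pcompose_1 nonneg_coeffs_def coeff_pCons split: nat.split)
  next
    case (Suc k)
    then have "nonneg_coeffs (P k)" "0 < coeff (P k) 1"
      using nonneg_coeffs_reflected_step P_eq by simp_all
    then show ?case
      unfolding Q_Suc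
      by (intro conjI nonneg_coeffs_mult nonneg_coeffs_linear nonneg_coeffs_pderiv) (simp_all add: coeff_pderiv)
  qed
  then have "nonneg_coeffs (P k)" "0 < coeff (P k) 0"
    using nonneg_coeffs_reflected_step P_eq by simp_all
  moreover have "0 \<le> - t * coeff (P k) 1"
    using assms \<open>nonneg_coeffs (P k)\<close> by (intro mult_nonneg_nonneg) (simp_all add: nonneg_coeffs_def)
  ultimately have "0 < poly (P k) (- t)"
    using poly_ge_linear_part[of "P k" "- t"] assms by linarith
  then show ?thesis by (simp add: P_def poly_pcompose)
qed

lemma odd_deriv_poly_neg_gt_one:
  assumes "1 < t"
  shows "poly (odd_deriv_poly k) t < 0"
proof -
  define Q where "Q k = pcompose (even_deriv_poly k) [:1, 1:]" for k
  define P where "P k = - pcompose (odd_deriv_poly k) [:1, 1:]" for k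
  have P_eq: "P k = smult (1/2) ([:0, 1:] * (Q k + smult 2 ([:1, 1:] * pderiv (Q k))))" for k
    unfolding P_def Q_def odd_deriv_poly_def odd_of_even_shift by simp
  have Q_Suc: "Q (Suc k) = [:0, 1:] * pderiv (P k)" for k
    unfolding P_def Q_def even_deriv_poly_Suc_shift by (simp add: pderiv_minus)
  have Q_pos: "nonneg_coeffs (Q k) \<and> 0 < coeff (Q k) 0 + coeff (Q k) 1" for k
  proof (induction k)
    case 0
    show ?case by (simp add: Q_def pcompose_1 nonneg_coeffs_def coeff_pCons split: nat.split)
  next
    case (Suc k)
    then have "nonneg_coeffs (P k)" "0 < coeff (P k) 1"
      using nonneg_coeffs_shifted_step P_eq by simp_all
    then show ?case
      unfolding Q_Suc
      by (intro conjI nonneg_coeffs_mult nonneg_coeffs_linear nonneg_coeffs_pderiv) (simp_all add: coeff_pderiv)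
  qed
  then have "nonneg_coeffs (P k)" "0 < coeff (P k) 1"
    using nonneg_coeffs_shifted_step P_eq by simp_all
  moreover have "0 \<le> coeff (P k) 0"
    using \<open>nonneg_coeffs (P k)\<close> by (simp add: nonneg_coeffs_def)
  moreover have "0 < (t - 1) * coeff (P k) 1"
    using assms \<open>0 < coeff (P k) 1\<close> by simp
  ultimately have "0 < poly (P k) (t - 1)"
    using poly_ge_linear_part[of "P k" "t - 1"] assms by linarith
  then show ?thesis by (simp add: P_def poly_pcompose)
qed

lemma odd_deriv_poly_root_bounds:
  assumes "poly (odd_deriv_poly k) t = 0"
  shows "0 < t" "t \<le> 1"
  using odd_deriv_poly_sign_nonpos[of t k] odd_deriv_poly_neg_gt_one[of t k] assms by force+

lemma map_poly_of_real_pderiv: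
  "map_poly of_real (pderiv p) = (pderiv (map_poly of_real p) :: 'a::real_field poly)"
  by (rule poly_eqI) (simp add: coeff_pderiv coeff_map_poly)

lemma map_poly_of_real_mult:
  "map_poly of_real (p * q) = (map_poly of_real p * map_poly of_real q :: 'a::real_field poly)"
  by (rule poly_eqI) (simp add: coeff_mult coeff_map_poly)

lemma map_poly_of_real_add:
  "map_poly of_real (p + q) = (map_poly of_real p + map_poly of_real q :: 'a::real_field poly)"
  by (rule poly_eqI) (simp add: coeff_map_poly)

lemma poly_map_poly_of_real: "poly (map_poly of_real p) (of_real x) = (of_real (poly p x) :: 'a::real_field)"
  by (induction p) (auto simp: map_poly_pCons)

lemma map_poly_of_real_smult:
  "map_poly of_real (smult c p) = (smult (of_real c) (map_poly of_real p) :: 'a::real_field poly)"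
  by (rule map_poly_smult) simp_all

lemma map_poly_of_real_pCons:
  "map_poly of_real (pCons c p) = (pCons (of_real c) (map_poly of_real p) :: 'a::real_field poly)"
  by (rule map_poly_pCons) simp

lemmas map_poly_of_real_simps =
  map_poly_of_real_pderiv map_poly_of_real_mult map_poly_of_real_add map_poly_of_real_smult map_poly_of_real_pCons

primrec riccati_poly :: "nat \<Rightarrow> 'a::field poly" where
  "riccati_poly 0 = [:0, 1:]"
| "riccati_poly (Suc n) = smult (1/2) ([:1, 0, -1:] * pderiv (riccati_poly n))"

lemma riccati_step_odd:
  "smult (1/2) ([:1, 0, -1:] * pderiv ([:0, 1:] * pcompose (map_poly of_real p) [:0, 0, 1:]))
     = (pcompose (map_poly of_real (odd_of_even p)) [:0, 0, 1:] :: 'a::real_field poly)"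
  unfolding odd_of_even_def map_poly_of_real_simps
  by (subst poly_eq_poly_eq_iff[symmetric])
     (simp add: fun_eq_iff pderiv_mult pderiv_pcompose poly_pcompose pderiv_pCons algebra_simps)

lemma riccati_step_even:
  "smult (1/2) ([:1, 0, -1:] * pderiv (pcompose (map_poly of_real q) [:0, 0, 1:]))
     = [:0, 1:] * (pcompose (map_poly of_real ([:1, -1:] * pderiv q)) [:0, 0, 1:] :: 'a::real_field poly)"
  unfolding map_poly_of_real_simps
  by (subst poly_eq_poly_eq_iff[symmetric])
     (simp add: fun_eq_iff pderiv_mult pderiv_pcompose poly_pcompose pderiv_pCons algebra_simps)

lemma riccati_poly_odd:
  "riccati_poly (2 * k + 1) = (pcompose (map_poly of_real (odd_deriv_poly k)) [:0, 0, 1:] :: 'a::real_field poly)"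
proof -
  have "riccati_poly (2 * k) = ([:0, 1:] * pcompose (map_poly of_real (even_deriv_poly k)) [:0, 0, 1:] :: 'a poly)"
  proof (induction k)
    case 0
    show ?case by (simp add: pcompose_1 map_poly_of_real_simps)
  next
    case (Suc k)
    then show ?case
      by (simp add: riccati_step_odd riccati_step_even odd_deriv_poly_def del: mult_pCons_left)
  qed
  then show ?thesis by (simp add: riccati_step_odd odd_deriv_poly_def del: mult_pCons_left)
qed

lemma has_field_derivative_riccati_poly:
  fixes Y :: "'a::real_normed_field \<Rightarrow> 'a"
  assumes "(Y has_field_derivative (1 - Y w ^ 2) / 2) (at w)"
  shows "((\<lambda>w. poly (riccati_poly n) (Y w)) has_field_derivative poly (riccati_poly (Suc n)) (Y w)) (at w)"
  by (rule DERIV_cong[OF DERIV_chain2[OF poly_DERIV assms]]) (simp add: power2_eq_square field_simps)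

(* For c = cosh a and r = sinh a this is coth ((w - a) / 2). *)
definition sinh_cosh_quot :: "complex \<Rightarrow> complex \<Rightarrow> complex \<Rightarrow> complex" where
  "sinh_cosh_quot r c w = (sinh w + r) / (cosh w - c)"

lemma has_field_derivative_sinh_cosh_quot:
  assumes "r\<^sup>2 = c\<^sup>2 - 1" "cosh w \<noteq> c"
  shows "(sinh_cosh_quot r c has_field_derivative (1 - (sinh_cosh_quot r c w)\<^sup>2) / 2) (at w)"
proof -
  have quot: "(1 - (M / D)\<^sup>2) / 2 = N / D\<^sup>2" if "D \<noteq> 0" "D\<^sup>2 - M\<^sup>2 = 2 * N" for D M N :: complex
  proof -
    have "(1 - (M / D)\<^sup>2) / 2 = (D\<^sup>2 - M\<^sup>2) / (2 * D\<^sup>2)"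
      using that(1) by (simp add: field_simps)
    then show ?thesis using that(2) by simp
  qed
  have "(cosh w - c)\<^sup>2 - (sinh w + r)\<^sup>2 = 2 * (cosh w * (cosh w - c) - (sinh w + r) * sinh w)"
    using assms(1) cosh_square_eq[of w] by (simp add: power2_eq_square algebra_simps)
  then have "(1 - ((sinh w + r) / (cosh w - c))\<^sup>2) / 2
             = (cosh w * (cosh w - c) - (sinh w + r) * sinh w) / (cosh w - c)\<^sup>2"
    using assms(2) by (intro quot) simp_all
  moreover have "(sinh_cosh_quot r c has_field_derivative
      (cosh w * (cosh w - c) - (sinh w + r) * sinh w) / (cosh w - c)\<^sup>2) (at w)"
    unfolding sinh_cosh_quot_def[abs_def] using assms(2)
    by (auto intro!: derivative_eq_intros simp: power2_eq_square)
  ultimately show ?thesis by (simp only: sinh_cosh_quot_def)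
qed

lemma cosh_of_real: "cosh (of_real x) = (of_real (cosh x) :: 'a::{real_normed_field, banach})"
  by (simp add: cosh_field_def cosh_def exp_of_real[symmetric] scaleR_conv_of_real)

lemma sinh_of_real: "sinh (of_real x) = (of_real (sinh x) :: 'a::{real_normed_field, banach})"
  by (simp add: sinh_field_def sinh_def exp_of_real[symmetric] scaleR_conv_of_real)

lemma higher_deriv_sinh_div_cosh_diff:
  fixes c :: real and r :: complex
  assumes r: "r\<^sup>2 = of_real (c\<^sup>2 - 1)" and "cosh z \<noteq> c"
  shows "(deriv ^^ n) (\<lambda>z. sinh z / (cosh z - c)) z =
           Re ((poly (riccati_poly n) (sinh_cosh_quot r (of_real c) (of_real z))
                + poly (riccati_poly n) (sinh_cosh_quot (- r) (of_real c) (of_real z))) / 2)"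
proof -
  define F where "F n w = (poly (riccati_poly n) (sinh_cosh_quot r (of_real c) w)
                           + poly (riccati_poly n) (sinh_cosh_quot (- r) (of_real c) w)) / 2" for n w
  have "(deriv ^^ n) (\<lambda>z. sinh z / (cosh z - c)) z = Re (F n (of_real z))" if "cosh z \<noteq> c" for n z
    using that
  proof (induction n arbitrary: z)
    case 0
    have avg: "((a + b) / d + (a + - b) / d) / 2 = a / d" for a b d :: complex
      by (simp add: add_divide_distrib[symmetric])
    have "poly (riccati_poly 0) y = y" for y :: complex
      by simp
    then have "F 0 (of_real z) = sinh (of_real z) / (cosh (of_real z) - of_real c)"
      unfolding F_def sinh_cosh_quot_def by (simp only: avg)
    also have "\<dots> = of_real (sinh z / (cosh z - c))"
      by (simp add: sinh_of_real cosh_of_real)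
    finally show ?case by simp
  next
    case (Suc n)
    have "cosh (complex_of_real z) \<noteq> of_real c"
      using Suc.prems by (simp add: cosh_of_real)
    then have "(F n has_field_derivative F (Suc n) (of_real z)) (at (of_real z))"
      unfolding F_def using r
      by (intro DERIV_cdivide DERIV_add has_field_derivative_riccati_poly has_field_derivative_sinh_cosh_quot)
         simp_all
    then have "((\<lambda>z. Re (F n (of_real z))) has_field_derivative Re (F (Suc n) (of_real z))) (at z)"
      by (rule has_field_derivative_Re[OF has_vector_derivative_real_field])
    then have "((deriv ^^ n) (\<lambda>z. sinh z / (cosh z - c)) has_field_derivative Re (F (Suc n) (of_real z))) (at z)"
    proof (rule has_field_derivative_transform_within_open)
      show "open {z. cosh z \<noteq> c}"
        by (intro open_Collect_neq continuous_intros)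
    qed (use Suc in auto)
    then show ?case
      by (simp add: DERIV_imp_deriv)
  qed
  then show ?thesis
    using assms(2) by (simp add: F_def)
qed

lemma alpha_eq_odd_deriv_poly:
  assumes "x \<noteq> 0"
  shows "alpha k x = poly (odd_deriv_poly k) (1 - 2 / x) / fact (2 * k + 1)"
proof -
  define c where "c = 1 - x"
  define r where "r = csqrt (of_real (c\<^sup>2 - 1))"
  have r: "r\<^sup>2 = of_real (c\<^sup>2 - 1)"
    by (simp add: r_def)
  have "cosh 0 \<noteq> c"
    using assms by (simp add: c_def)
  have square: "poly [:0, 0, 1:] y = y\<^sup>2" for y :: complex
    by (simp add: power2_eq_square)
  have odd_value: "poly (riccati_poly (2 * k + 1)) y = of_real (poly (odd_deriv_poly k) (1 - 2 / x))"
    if "y\<^sup>2 = of_real (1 - 2 / x)" for y :: complex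
    unfolding riccati_poly_odd poly_pcompose square that by (rule poly_map_poly_of_real)
  have value_at_0: "(c\<^sup>2 - 1) / x\<^sup>2 = 1 - 2 / x"
    using assms by (simp add: c_def field_simps power2_eq_square)
  have "(r / of_real x)\<^sup>2 = r\<^sup>2 / of_real (x\<^sup>2)"
    by (simp add: power_divide)
  also have "\<dots> = of_real ((c\<^sup>2 - 1) / x\<^sup>2)"
    by (simp only: r of_real_divide)
  finally have "(r / of_real x)\<^sup>2 = of_real (1 - 2 / x)"
    by (simp only: value_at_0)
  then have "poly (riccati_poly (2 * k + 1)) (- (r / of_real x)) = of_real (poly (odd_deriv_poly k) (1 - 2 / x))"
    "poly (riccati_poly (2 * k + 1)) (r / of_real x) = of_real (poly (odd_deriv_poly k) (1 - 2 / x))"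
    by (simp_all only: odd_value power2_minus)
  moreover have "sinh_cosh_quot (- r) (of_real c) 0 = - (r / of_real x)"
    "sinh_cosh_quot r (of_real c) 0 = r / of_real x"
    by (simp_all add: sinh_cosh_quot_def c_def)
  ultimately have "(deriv ^^ (2 * k + 1)) (\<lambda>z. sinh z / (cosh z - c)) 0 = poly (odd_deriv_poly k) (1 - 2 / x)"
    using higher_deriv_sinh_div_cosh_diff[OF r \<open>cosh 0 \<noteq> c\<close>, of "2 * k + 1"]
    unfolding of_real_0 by simp
  moreover have "(\<lambda>z. sinh z / (cosh z - c)) = (\<lambda>z. sinh z / (cosh z - 1 + x))"
    by (simp add: c_def algebra_simps)
  ultimately show ?thesis
    by (simp add: alpha_def)
qed

lemma alpha_root_gt_two:
  assumes "x \<noteq> 0" "alpha k x = 0"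
  shows "2 < x"
proof -
  have "poly (odd_deriv_poly k) (1 - 2 / x) = 0"
    using assms alpha_eq_odd_deriv_poly by simp
  then have "0 < 1 - 2 / x" "1 - 2 / x \<le> 1"
    by (rule odd_deriv_poly_root_bounds)+
  then show ?thesis
    using assms(1) by (cases "0 < x") (auto simp: field_simps)
qed

lemma sqrt_conjugates_bounds:
  fixes a :: real
  assumes "1 < a"
  shows "a - sqrt (a\<^sup>2 - 1) \<in> {0<..<1}" "1 < a + sqrt (a\<^sup>2 - 1)"
proof -
  have "a - 1 < sqrt (a\<^sup>2 - 1)"
    using assms by (intro real_less_rsqrt) (simp add: power2_eq_square algebra_simps)
  moreover have "sqrt (a\<^sup>2 - 1) < a"
    using assms real_sqrt_less_mono[of "a\<^sup>2 - 1" "a\<^sup>2"] by simp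
  ultimately show "a - sqrt (a\<^sup>2 - 1) \<in> {0<..<1}" "1 < a + sqrt (a\<^sup>2 - 1)"
    using assms by auto
qed

theorem proposition2p3:
  fixes m :: nat and \<xi> :: real and s :: real and \<eta> :: "real \<Rightarrow> real"
  assumes "m \<ge> 1"
    and "\<xi> \<noteq> 0" and "alpha m \<xi> = 0"
    and "s \<in> {1, -1}"
    and "((\<lambda>\<Delta>. \<eta> \<Delta> - (\<xi> - 1 + s * sqrt ((\<xi> - 1)\<^sup>2 - 1))) \<longlongrightarrow> 0) (at_right 0)"
    and "\<forall>\<^sub>F \<Delta> in at_right 0. \<bar>\<eta> \<Delta>\<bar> < 1"
  shows "s = -1 \<and> \<xi> - 1 - sqrt ((\<xi> - 1)\<^sup>2 - 1) \<in> {0<..<1}"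
proof -
  define L where "L = \<xi> - 1 + s * sqrt ((\<xi> - 1)\<^sup>2 - 1)"
  have "1 < \<xi> - 1"
    using alpha_root_gt_two[OF assms(2,3)] by simp
  note bounds = sqrt_conjugates_bounds[OF this]
  have "(\<eta> \<longlongrightarrow> L) (at_right 0)"
    using assms(5) by (simp add: L_def LIM_zero_iff)
  then have "\<bar>L\<bar> \<le> 1"
    by (rule tendsto_upperbound[OF tendsto_rabs])
       (use assms(6) in \<open>auto elim: eventually_mono simp: trivial_limit_at_right_real\<close>)
  then have "s = -1"
    using assms(4) bounds(2) by (auto simp: L_def)
  then show ?thesis
    using bounds(1) by simp
qed

end
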